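(* Fix real $R_1,R_2\ge1$. For $Y>0$ let $\mathcal{D}_Y(N,R_1,R_2)=\bigcup_{\ell>Y}\mathcal{C}'_\ell(N,R_1,R_2)$, the union over primes $\ell>Y$. Then \[ \frac{\#\mathcal{D}_Y(N,R_1,R_2)}{N}=O\Big(\sum_{\ell>Y}\ell^{-4/3}+\frac{1}{\log N}\Big) \] for $N\ge 2$, with implied constant depending only on $R_1,R_2$.
   Context: $\mathcal{R}_{\mathbb{Z}^3}(N,R_1,R_2)=\{(a,b,c)\in\mathbb{Z}_{\ge1}^3:\ ab^{2/3}c<N,\ a/c\in[1,R_1],\ b\in[1,R_2]\}$. A triple $(a,b,c)$ of positive integers is $\ell$-carefree if $\ell^2\nmid ab$, $\ell^2\nmid bc$ and $\ell^2\nmid ca$. $\mathcal{C}'_\ell(N,R_1,R_2)$ is the set of triples in $\mathcal{R}_{\mathbb{Z}^3}(N,R_1,R_2)$ that are not $\ell$-carefree. Sums over $\ell$ are over primes. *)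

theory Defs
  imports "HOL-Analysis.Analysis" "HOL-Computational_Algebra.Primes"
begin

definition region3 :: "real \<Rightarrow> real \<Rightarrow> real \<Rightarrow> (nat \<times> nat \<times> nat) set" where
  "region3 N R1 R2 = {(a, b, c). a \<ge> 1 \<and> b \<ge> 1 \<and> c \<ge> 1 \<and>
      real a * real b powr (2/3) * real c < N \<and>
      1 \<le> real a / real c \<and> real a / real c \<le> R1 \<and>
      1 \<le> real b \<and> real b \<le> R2}"

definition carefree :: "nat \<Rightarrow> nat \<times> nat \<times> nat \<Rightarrow> bool" where
  "carefree l t = (case t of (a, b, c) \<Rightarrow>
      \<not> l^2 dvd a * b \<and> \<not> l^2 dvd b * c \<and> \<not> l^2 dvd c * a)"

definition notCarefree :: "nat \<Rightarrow> real \<Rightarrow> real \<Rightarrow> real \<Rightarrow> (nat \<times> nat \<times> nat) set" where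
  "notCarefree l N R1 R2 = {t \<in> region3 N R1 R2. \<not> carefree l t}"

definition bigPrimeBad :: "real \<Rightarrow> real \<Rightarrow> real \<Rightarrow> real \<Rightarrow> (nat \<times> nat \<times> nat) set" where
  "bigPrimeBad Y N R1 R2 = (\<Union>l \<in> {l. prime l \<and> real l > Y}. notCarefree l N R1 R2)"

end

theory Submission
  imports Defs
begin

(* For a prime l > R2 the middle coordinate b <= R2 is prime to l, so a triple that is not
   l-carefree has l^2 | a, l^2 | c, or l | a and l | c.  The region lies in the box
   a <= sqrt (R1 N), b <= R2, c <= sqrt N, so each of the three cases contains at most
   sqrt R1 R2 N / l^2 triples, and only primes l <= sqrt (R1 N) occur.  Summing over primes
   l > Y >= R2 gives O(N sum l^-2) <= O(N sum l^(-4/3)).  For Y < R2 the tail sum is at least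
   its value at R2, a positive constant, and the trivial bound #region = O(N) suffices. *)

definition multiples_upto :: "nat \<Rightarrow> real \<Rightarrow> nat set" where
  "multiples_upto m X = {k. 1 \<le> k \<and> real k \<le> X \<and> m dvd k}"

lemma finite_multiples_upto [simp]: "finite (multiples_upto m X)"
proof (rule finite_subset)
  show "multiples_upto m X \<subseteq> {..nat \<lfloor>X\<rfloor>}"
    unfolding multiples_upto_def by (auto simp: le_nat_floor)
qed simp

lemma card_multiples_upto_le:
  assumes "m > 0" "X \<ge> 0"
  shows "real (card (multiples_upto m X)) \<le> X / m"
proof -
  have "multiples_upto m X \<subseteq> (\<lambda>k. m * k) ` {1..nat \<lfloor>X / m\<rfloor>}"
  proof
    fix a assume "a \<in> multiples_upto m X"
    then obtain k where a: "a = m * k" "1 \<le> a" "real a \<le> X"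
      unfolding multiples_upto_def by auto
    then have "k \<in> {1..nat \<lfloor>X / m\<rfloor>}"
      using assms by (auto simp: le_nat_floor field_simps)
    then show "a \<in> (\<lambda>k. m * k) ` {1..nat \<lfloor>X / m\<rfloor>}" using a(1) by blast
  qed
  then have "card (multiples_upto m X) \<le> card ((\<lambda>k. m * k) ` {1..nat \<lfloor>X / m\<rfloor>})"
    by (intro card_mono) auto
  also have "\<dots> \<le> nat \<lfloor>X / m\<rfloor>"
    using card_image_le[of "{1..nat \<lfloor>X / m\<rfloor>}" "\<lambda>k. m * k"] by simp
  also have "real (nat \<lfloor>X / m\<rfloor>) \<le> X / m" using assms by simp
  finally show ?thesis by simp
qed

lemma card_multiples_box_le:
  assumes "p > 0" "q > 0" "r > 0" "X \<ge> 0" "Y \<ge> 0" "Z \<ge> 0"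
  shows "real (card (multiples_upto p X \<times> multiples_upto q Y \<times> multiples_upto r Z))
           \<le> X * Y * Z / (p * q * r)"
proof -
  have "real (card (multiples_upto p X \<times> multiples_upto q Y \<times> multiples_upto r Z))
          = real (card (multiples_upto p X)) * real (card (multiples_upto q Y))
              * real (card (multiples_upto r Z))"
    by (simp add: card_cartesian_product)
  also have "\<dots> \<le> (X / p) * (Y / q) * (Z / r)"
    using assms by (intro mult_mono card_multiples_upto_le) auto
  finally show ?thesis by simp
qed

lemma prime_power2_dvd_mult_cases:
  fixes l x y :: "'a :: factorial_semiring_gcd"
  assumes "prime l" "l^2 dvd x * y"
  shows "l^2 dvd x \<or> l^2 dvd y \<or> (l dvd x \<and> l dvd y)"
proof (cases "l dvd x")
  case False
  then have "coprime (l^2) x" using assms(1) by (simp add: prime_imp_coprime)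
  then show ?thesis using assms(2) by (simp add: coprime_dvd_mult_right_iff)
next
  case True
  show ?thesis
  proof (cases "l dvd y")
    case False
    then have "coprime (l^2) y" using assms(1) by (simp add: prime_imp_coprime)
    then show ?thesis using assms(2) by (simp add: coprime_dvd_mult_left_iff)
  qed (use True in blast)
qed

lemma not_carefree_dvd_cases:
  assumes "prime l" "\<not> l dvd b" "\<not> carefree l (a, b, c)"
  shows "l^2 dvd a \<or> l^2 dvd c \<or> (l dvd a \<and> l dvd c)"
proof -
  have "coprime (l^2) b" using assms(1,2) by (simp add: prime_imp_coprime)
  then show ?thesis
    using assms(3) prime_power2_dvd_mult_cases[OF assms(1), of c a]
    by (auto simp: carefree_def coprime_dvd_mult_left_iff coprime_dvd_mult_right_iff)
qed

lemma region3_bounds: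
  assumes "(a, b, c) \<in> region3 N R1 R2"
  shows "1 \<le> c" "c \<le> a" "real a \<le> sqrt (R1 * N)" "1 \<le> b" "real b \<le> R2"
    "real c \<le> sqrt N"
proof -
  have h: "1 \<le> b" "1 \<le> c" "real a * real b powr (2/3) * real c < N"
    "1 \<le> real a / real c" "real a / real c \<le> R1" "real b \<le> R2"
    using assms unfolding region3_def by auto
  show "1 \<le> c" "1 \<le> b" "real b \<le> R2" using h by auto
  have ca: "real c \<le> real a" and aR: "real a \<le> R1 * real c"
    using h(2,4,5) by (simp_all add: divide_simps)
  then show "c \<le> a" by simp
  have "real a * real c * 1 \<le> real a * real c * real b powr (2/3)"
    using h(1) by (intro mult_left_mono) (auto simp: ge_one_powr_ge_zero)
  then have ac: "real a * real c < N" using h(3) by (simp add: algebra_simps)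
  have "(real c)^2 \<le> real a * real c" using ca by (simp add: power2_eq_square mult_right_mono)
  then show "real c \<le> sqrt N" using ac by (intro real_le_rsqrt) simp
  have "(real a)^2 \<le> real a * (R1 * real c)"
    using aR by (simp add: power2_eq_square mult_left_mono)
  also have "\<dots> = R1 * (real a * real c)" by simp
  also have "\<dots> \<le> R1 * N" using ac h(4,5) by (intro mult_left_mono) auto
  finally show "real a \<le> sqrt (R1 * N)" by (rule real_le_rsqrt)
qed

lemma region3_subset_box:
  "region3 N R1 R2 \<subseteq>
     multiples_upto 1 (sqrt (R1 * N)) \<times> multiples_upto 1 R2 \<times> multiples_upto 1 (sqrt N)"
proof
  fix x assume x: "x \<in> region3 N R1 R2"
  obtain a b c where x_eq: "x = (a, b, c)" by (cases x)
  note bounds = region3_bounds[OF x[unfolded x_eq]]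
  then have "1 \<le> a" by linarith
  with bounds show
    "x \<in> multiples_upto 1 (sqrt (R1 * N)) \<times> multiples_upto 1 R2 \<times> multiples_upto 1 (sqrt N)"
    unfolding x_eq multiples_upto_def by simp
qed

lemma finite_region3: "finite (region3 N R1 R2)"
  using region3_subset_box by (rule finite_subset) simp

lemma card_region3_le:
  assumes "R1 \<ge> 0" "R2 \<ge> 0" "N \<ge> 0"
  shows "real (card (region3 N R1 R2)) \<le> sqrt R1 * R2 * N"
proof -
  have "real (card (region3 N R1 R2)) \<le> real (card
      (multiples_upto 1 (sqrt (R1 * N)) \<times> multiples_upto 1 R2 \<times> multiples_upto 1 (sqrt N)))"
    using region3_subset_box by (intro of_nat_mono card_mono) simp_all
  also have "\<dots> \<le> sqrt (R1 * N) * R2 * sqrt N"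
    using card_multiples_box_le[of 1 1 1 "sqrt (R1 * N)" R2 "sqrt N"] assms by simp
  also have "\<dots> = sqrt R1 * R2 * N"
    using assms by (simp add: real_sqrt_mult)
  finally show ?thesis .
qed

lemma notCarefree_dvd_cases:
  assumes "prime l" "R2 < real l" "(a, b, c) \<in> notCarefree l N R1 R2"
  shows "l^2 dvd a \<or> l^2 dvd c \<or> (l dvd a \<and> l dvd c)"
proof -
  have reg: "(a, b, c) \<in> region3 N R1 R2" and nc: "\<not> carefree l (a, b, c)"
    using assms(3) unfolding notCarefree_def by auto
  have "1 \<le> b" "b < l" using region3_bounds(4,5)[OF reg] assms(2) by auto
  then have "\<not> l dvd b" by (auto dest: dvd_imp_le)
  then show ?thesis using not_carefree_dvd_cases assms(1) nc by blast
qed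

lemma notCarefree_subset_boxes:
  assumes "prime l" "R2 < real l"
  shows "notCarefree l N R1 R2 \<subseteq>
      multiples_upto (l^2) (sqrt (R1 * N)) \<times> multiples_upto 1 R2 \<times> multiples_upto 1 (sqrt N)
    \<union> multiples_upto 1 (sqrt (R1 * N)) \<times> multiples_upto 1 R2 \<times> multiples_upto (l^2) (sqrt N)
    \<union> multiples_upto l (sqrt (R1 * N)) \<times> multiples_upto 1 R2 \<times> multiples_upto l (sqrt N)"
    (is "_ \<subseteq> ?boxes")
proof
  fix x assume x: "x \<in> notCarefree l N R1 R2"
  obtain a b c where x_eq: "x = (a, b, c)" by (cases x)
  with x have abc: "(a, b, c) \<in> notCarefree l N R1 R2" by simp
  then have "(a, b, c) \<in> region3 N R1 R2" unfolding notCarefree_def by auto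
  then have "a \<in> multiples_upto 1 (sqrt (R1 * N))" "b \<in> multiples_upto 1 R2"
    "c \<in> multiples_upto 1 (sqrt N)"
    using region3_subset_box by blast+
  moreover have "k \<in> multiples_upto m X" if "k \<in> multiples_upto 1 X" "m dvd k" for k m X
    using that unfolding multiples_upto_def by simp
  ultimately show "x \<in> ?boxes"
    using notCarefree_dvd_cases[OF assms abc] unfolding x_eq by blast
qed

lemma card_notCarefree_le:
  assumes "prime l" "R2 < real l" "R1 \<ge> 0" "R2 \<ge> 0" "N \<ge> 0"
  shows "real (card (notCarefree l N R1 R2)) \<le> 3 * sqrt R1 * R2 * N / real l ^ 2"
proof -
  define s t where "s = sqrt (R1 * N)" and "t = sqrt N"
  define B where "B = multiples_upto 1 R2"
  define T1 T2 T3 where "T1 = multiples_upto (l^2) s \<times> B \<times> multiples_upto 1 t"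
    and "T2 = multiples_upto 1 s \<times> B \<times> multiples_upto (l^2) t"
    and "T3 = multiples_upto l s \<times> B \<times> multiples_upto l t"
  have l: "l > 0" using assms(1) prime_gt_0_nat by blast
  have st: "s \<ge> 0" "t \<ge> 0" "s * t = sqrt R1 * N"
    using assms unfolding s_def t_def by (auto simp: real_sqrt_mult)
  have "notCarefree l N R1 R2 \<subseteq> T1 \<union> T2 \<union> T3"
    unfolding T1_def T2_def T3_def B_def s_def t_def by (rule notCarefree_subset_boxes[OF assms(1,2)])
  moreover have "finite (T1 \<union> T2 \<union> T3)" unfolding T1_def T2_def T3_def B_def by simp
  ultimately have "card (notCarefree l N R1 R2) \<le> card (T1 \<union> T2 \<union> T3)"
    by (intro card_mono)
  also have "\<dots> \<le> card T1 + card T2 + card T3"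
    by (metis add_le_mono card_Un_le le_refl order_trans)
  finally have "real (card (notCarefree l N R1 R2))
      \<le> real (card T1) + real (card T2) + real (card T3)"
    by linarith
  also have "\<dots> \<le> s * R2 * t / real l ^ 2 + s * R2 * t / real l ^ 2 + s * R2 * t / real l ^ 2"
  proof (intro add_mono)
    show "real (card T1) \<le> s * R2 * t / real l ^ 2"
      unfolding T1_def B_def using card_multiples_box_le[of "l^2" 1 1 s R2 t] l st assms(4) by simp
    show "real (card T2) \<le> s * R2 * t / real l ^ 2"
      unfolding T2_def B_def using card_multiples_box_le[of 1 1 "l^2" s R2 t] l st assms(4) by simp
    show "real (card T3) \<le> s * R2 * t / real l ^ 2"
      unfolding T3_def B_def using card_multiples_box_le[of l 1 l s R2 t] l st assms(4)
      by (simp add: power2_eq_square)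
  qed
  also have "\<dots> = 3 * (s * t) * R2 / real l ^ 2" by (simp add: algebra_simps)
  also have "\<dots> = 3 * sqrt R1 * R2 * N / real l ^ 2" using st(3) by (simp add: algebra_simps)
  finally show ?thesis .
qed

lemma notCarefree_prime_le:
  assumes "prime l" "R2 < real l" "x \<in> notCarefree l N R1 R2"
  shows "real l \<le> sqrt (R1 * N)"
proof -
  obtain a b c where abc: "x = (a, b, c)" by (cases x)
  then have "(a, b, c) \<in> region3 N R1 R2" using assms(3) unfolding notCarefree_def by auto
  note bounds = region3_bounds[OF this]
  have "l dvd a \<or> l dvd c"
    using notCarefree_dvd_cases[OF assms(1,2) assms(3)[unfolded abc]]
    by (auto simp: power2_eq_square dest: dvd_mult_left)
  then have "l \<le> a" using bounds(1,2) by (auto dest: dvd_imp_le)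
  then show ?thesis using bounds(3) by linarith
qed

definition prime_tail :: "real \<Rightarrow> real \<Rightarrow> real" where
  "prime_tail s Y = (\<Sum>\<^sub>\<infinity>l \<in> {l :: nat. prime l \<and> real l > Y}. real l powr (-s))"

lemma powr_minus_summable_on:
  assumes "s > 1"
  shows "(\<lambda>l::nat. real l powr (-s)) summable_on A"
proof -
  have "summable (\<lambda>l::nat. real l powr (-s))"
    using assms by (subst summable_real_powr_iff) simp
  then have "(\<lambda>l::nat. real l powr (-s)) summable_on UNIV"
    by (subst summable_on_UNIV_nonneg_real_iff) simp_all
  then show ?thesis by (rule summable_on_subset_banach) simp
qed

lemma sum_le_prime_tail:
  assumes "s > 1" "finite I" "I \<subseteq> {l. prime l \<and> real l > Y}"
  shows "(\<Sum>l\<in>I. real l powr (-s)) \<le> prime_tail s Y"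
  unfolding prime_tail_def using assms
  by (intro finite_sum_le_infsum powr_minus_summable_on) auto

lemma prime_tail_pos:
  assumes "s > 1"
  shows "prime_tail s Y > 0"
proof -
  obtain p :: nat where p: "prime p" "p > nat \<lceil>Y\<rceil>" using bigger_prime by blast
  have "real p > Y" using p(2) by linarith
  have "0 < (\<Sum>l\<in>{p}. real l powr (-s))" using prime_gt_0_nat[OF p(1)] by simp
  also have "\<dots> \<le> prime_tail s Y" using assms p \<open>real p > Y\<close> by (intro sum_le_prime_tail) auto
  finally show ?thesis .
qed

lemma prime_tail_antimono:
  assumes "s > 1" "Y \<le> Y'"
  shows "prime_tail s Y' \<le> prime_tail s Y"
proof -
  have "{l. prime l \<and> Y' < real l} \<subseteq> {l. prime l \<and> Y < real l}" using assms(2) by auto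
  then show ?thesis
    unfolding prime_tail_def by (intro infsum_mono2 powr_minus_summable_on[OF assms(1)]) auto
qed

lemma card_bigPrimeBad_le_prime_tail:
  assumes "1 < s" "s \<le> 2" "R2 \<le> Y" "R1 \<ge> 0" "R2 \<ge> 0" "N \<ge> 0"
  shows "real (card (bigPrimeBad Y N R1 R2)) \<le> 3 * sqrt R1 * R2 * N * prime_tail s Y"
proof -
  define I where "I = {l. prime l \<and> Y < real l \<and> real l \<le> sqrt (R1 * N)}"
  have "finite I"
  proof (rule finite_subset)
    show "I \<subseteq> {..nat \<lfloor>sqrt (R1 * N)\<rfloor>}" unfolding I_def by (auto simp: le_nat_floor)
  qed simp
  have "bigPrimeBad Y N R1 R2 = (\<Union>l\<in>I. notCarefree l N R1 R2)"
  proof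
    show "bigPrimeBad Y N R1 R2 \<subseteq> (\<Union>l\<in>I. notCarefree l N R1 R2)"
    proof
      fix x assume "x \<in> bigPrimeBad Y N R1 R2"
      then obtain l where l: "prime l" "Y < real l" "x \<in> notCarefree l N R1 R2"
        unfolding bigPrimeBad_def by auto
      then have "real l \<le> sqrt (R1 * N)" using assms(3) by (intro notCarefree_prime_le) auto
      with l show "x \<in> (\<Union>l\<in>I. notCarefree l N R1 R2)" unfolding I_def by blast
    qed
  qed (auto simp: bigPrimeBad_def I_def)
  then have "real (card (bigPrimeBad Y N R1 R2)) \<le> (\<Sum>l\<in>I. real (card (notCarefree l N R1 R2)))"
    using card_UN_le[OF \<open>finite I\<close>] by (metis of_nat_mono of_nat_sum)
  also have "\<dots> \<le> (\<Sum>l\<in>I. 3 * sqrt R1 * R2 * N * real l powr (-s))"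
  proof (rule sum_mono)
    fix l assume "l \<in> I"
    then have l: "prime l" "R2 < real l" "real l \<ge> 1"
      using assms(3) prime_ge_1_nat unfolding I_def by auto
    have "real (card (notCarefree l N R1 R2)) \<le> 3 * sqrt R1 * R2 * N / real l ^ 2"
      using l assms by (intro card_notCarefree_le) auto
    also have "\<dots> = 3 * sqrt R1 * R2 * N * real l powr (-2)"
      using l(3) by (simp add: powr_minus powr_realpow divide_inverse)
    also have "\<dots> \<le> 3 * sqrt R1 * R2 * N * real l powr (-s)"
      using l(3) assms by (intro mult_left_mono powr_mono) auto
    finally show "real (card (notCarefree l N R1 R2)) \<le> 3 * sqrt R1 * R2 * N * real l powr (-s)" .
  qed
  also have "\<dots> = 3 * sqrt R1 * R2 * N * (\<Sum>l\<in>I. real l powr (-s))"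
    by (simp add: sum_distrib_left)
  also have "\<dots> \<le> 3 * sqrt R1 * R2 * N * prime_tail s Y"
    using assms \<open>finite I\<close> by (intro mult_left_mono sum_le_prime_tail) (auto simp: I_def)
  finally show ?thesis .
qed

lemma card_bigPrimeBad_le:
  assumes "1 < s" "s \<le> 2" "R1 \<ge> 0" "R2 \<ge> 0" "N \<ge> 0"
  shows "real (card (bigPrimeBad Y N R1 R2))
           \<le> (sqrt R1 * R2 / prime_tail s R2 + 3 * sqrt R1 * R2) * prime_tail s Y * N"
proof (cases "Y < R2")
  case True
  have T: "prime_tail s R2 > 0" "prime_tail s R2 \<le> prime_tail s Y"
    using True assms(1) by (auto intro: prime_tail_pos prime_tail_antimono)
  have "bigPrimeBad Y N R1 R2 \<subseteq> region3 N R1 R2"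
    unfolding bigPrimeBad_def notCarefree_def by auto
  then have "real (card (bigPrimeBad Y N R1 R2)) \<le> real (card (region3 N R1 R2))"
    by (intro of_nat_mono card_mono finite_region3)
  also have "\<dots> \<le> sqrt R1 * R2 / prime_tail s R2 * prime_tail s R2 * N"
    using card_region3_le[OF assms(3-5)] T(1) by simp
  also have "\<dots> \<le> sqrt R1 * R2 / prime_tail s R2 * prime_tail s Y * N"
    using T assms by (intro mult_right_mono mult_left_mono) auto
  also have "\<dots> \<le> (sqrt R1 * R2 / prime_tail s R2 + 3 * sqrt R1 * R2) * prime_tail s Y * N"
    using prime_tail_pos[OF assms(1), of Y] prime_tail_pos[OF assms(1), of R2] assms
    by (intro mult_right_mono) auto
  finally show ?thesis .
next
  case False
  then have "real (card (bigPrimeBad Y N R1 R2)) \<le> 3 * sqrt R1 * R2 * N * prime_tail s Y"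
    using assms by (intro card_bigPrimeBad_le_prime_tail) auto
  also have "\<dots> = 3 * sqrt R1 * R2 * prime_tail s Y * N" by (simp add: algebra_simps)
  also have "\<dots> \<le> (sqrt R1 * R2 / prime_tail s R2 + 3 * sqrt R1 * R2) * prime_tail s Y * N"
    using prime_tail_pos[OF assms(1), of Y] prime_tail_pos[OF assms(1), of R2] assms
    by (intro mult_right_mono) auto
  finally show ?thesis .
qed

theorem mainTheorem9:
  fixes R1 R2 :: real
  assumes "R1 \<ge> 1" and "R2 \<ge> 1"
  shows "\<exists>C > 0. \<forall>N :: real. \<forall>Y :: real. N \<ge> 2 \<longrightarrow> Y > 0 \<longrightarrow>
     real (card (bigPrimeBad Y N R1 R2)) / N
       \<le> C * ((\<Sum>\<^sub>\<infinity>l \<in> {l :: nat. prime l \<and> real l > Y}. real l powr (-4/3)) + 1 / ln N)"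
proof (intro exI conjI allI impI)
  define C where "C = sqrt R1 * R2 / prime_tail (4/3) R2 + 3 * sqrt R1 * R2"
  show "C > 0"
    unfolding C_def using assms prime_tail_pos[of "4/3" R2] by (intro add_pos_pos) auto
  fix N Y :: real assume N: "N \<ge> 2"
  have "real (card (bigPrimeBad Y N R1 R2)) / N \<le> C * prime_tail (4/3) Y"
    using card_bigPrimeBad_le[of "4/3" R1 R2 N Y] assms N
    by (simp add: C_def divide_simps mult.commute)
  also have "\<dots> \<le> C * (prime_tail (4/3) Y + 1 / ln N)"
    using \<open>C > 0\<close> N by (intro mult_left_mono) auto
  finally show "real (card (bigPrimeBad Y N R1 R2)) / N
       \<le> C * ((\<Sum>\<^sub>\<infinity>l \<in> {l :: nat. prime l \<and> real l > Y}. real l powr (-4/3)) + 1 / ln N)"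
    by (simp add: prime_tail_def)
qed

end
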